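(* Let $x\in\operatorname{dom}f$ and assume $\inf_{t\in T}f_t(x)>-\infty$. Under (SH), for every $\varepsilon>0$, \[ \mathrm{N}_{\operatorname{dom}f}(x)=\Big[\overline{\operatorname{co}}\Big(\bigcup_{t\in T}\partial_\varepsilon f_t(x)\Big)\Big]_\infty . \]
   Context: $X$ is a real separated locally convex space with dual $X^*$ carrying the weak$^*$ topology. $T$ is a nonempty index set, $\{f_t: t\in T\}$ are proper convex lsc functions $X\to\mathbb{R}\cup\{+\infty\}$, $f:=\sup_{t\in T}f_t$. $\partial_\varepsilon g(x)=\{x^*:\ g(y)\ge g(x)+\langle x^*,y-x\rangle-\varepsilon\ \forall y\}$ if $g(x)\in\mathbb{R}$ (empty otherwise). $\overline{\operatorname{co}}$ is the weak$^*$-closed convex hull; $C_\infty$ is the recession cone of a nonempty closed convex set $C$; $\mathrm{N}_A(x)$ is the normal cone. (SH): $T$ is compact Hausdorff and $t\mapsto f_t(z)$ is upper semicontinuous on $T$ for each $z\in X$. *)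

theory Defs
  imports "HOL-Analysis.Analysis"
begin

definition separated_lcs :: "'a::{real_vector,topological_space} itself \<Rightarrow> bool" where
  "separated_lcs _ \<longleftrightarrow>
     continuous_on UNIV (\<lambda>p::'a \<times> 'a. fst p + snd p) \<and>
     continuous_on UNIV (\<lambda>p::real \<times> 'a. fst p *\<^sub>R snd p) \<and>
     (\<forall>x y::'a. x \<noteq> y \<longrightarrow> (\<exists>U V. open U \<and> open V \<and> x \<in> U \<and> y \<in> V \<and> U \<inter> V = {})) \<and>
     (\<forall>U::'a set. open U \<and> 0 \<in> U \<longrightarrow> (\<exists>V. open V \<and> convex V \<and> 0 \<in> V \<and> V \<subseteq> U))"

text \<open>Topological dual X*: continuous linear functionals; pairing is application.
X* is viewed inside 'a \<Rightarrow> real, whose (product) topology restricted to X* is the weak* topology.\<close>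
definition dual :: "('a::{real_vector,topological_space} \<Rightarrow> real) set" where
  "dual = {\<phi>. linear \<phi> \<and> continuous_on UNIV \<phi>}"

definition wstar_convex :: "('a::{real_vector,topological_space} \<Rightarrow> real) set \<Rightarrow> bool" where
  "wstar_convex C \<longleftrightarrow> (\<forall>u\<in>C. \<forall>v\<in>C. \<forall>\<theta>\<in>{0..1::real}. (\<lambda>x. \<theta> * u x + (1 - \<theta>) * v x) \<in> C)"

definition wstar_cco :: "('a::{real_vector,topological_space} \<Rightarrow> real) set \<Rightarrow> ('a \<Rightarrow> real) set" where
  "wstar_cco S = \<Inter>{C. C \<subseteq> dual \<and> S \<subseteq> C \<and> wstar_convex C \<and> closedin (subtopology euclidean dual) C}"

definition recession_cone :: "('a \<Rightarrow> real) set \<Rightarrow> ('a \<Rightarrow> real) set" where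
  "recession_cone C = {d. \<forall>c\<in>C. \<forall>s::real. s \<ge> 0 \<longrightarrow> (\<lambda>x. c x + s * d x) \<in> C}"

definition normal_cone :: "'a::{real_vector,topological_space} set \<Rightarrow> 'a \<Rightarrow> ('a \<Rightarrow> real) set" where
  "normal_cone A x = {\<phi>\<in>dual. \<forall>y\<in>A. \<phi> (y - x) \<le> 0}"

definition eps_subdiff :: "real \<Rightarrow> ('a::{real_vector,topological_space} \<Rightarrow> ereal) \<Rightarrow> 'a \<Rightarrow> ('a \<Rightarrow> real) set" where
  "eps_subdiff \<epsilon> g x =
     (if \<bar>g x\<bar> \<noteq> \<infinity> then {\<phi>\<in>dual. \<forall>y. g y \<ge> g x + ereal (\<phi> (y - x)) - ereal \<epsilon>} else {})"

definition proper_fun :: "('a \<Rightarrow> ereal) \<Rightarrow> bool" where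
  "proper_fun g \<longleftrightarrow> (\<forall>x. g x \<noteq> -\<infinity>) \<and> (\<exists>x. g x \<noteq> \<infinity>)"

definition convex_fun :: "('a::real_vector \<Rightarrow> ereal) \<Rightarrow> bool" where
  "convex_fun g \<longleftrightarrow> (\<forall>x y. \<forall>\<theta>\<in>{0..1::real}.
      g (\<theta> *\<^sub>R x + (1 - \<theta>) *\<^sub>R y) \<le> ereal \<theta> * g x + ereal (1 - \<theta>) * g y)"

definition lsc_fun :: "('a::topological_space \<Rightarrow> ereal) \<Rightarrow> bool" where
  "lsc_fun g \<longleftrightarrow> (\<forall>c::real. closed {x. g x \<le> ereal c})"

definition dom_fun :: "('a \<Rightarrow> ereal) \<Rightarrow> 'a set" where
  "dom_fun g = {x. g x < \<infinity>}"

end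

theory Submission
  imports Defs "HOL-Analysis.Finite_Function_Topology"
begin

(* Write C for the weak* closed convex hull of the eps-subdifferentials of the f_t at x.
   Inclusion of the recession cone of C in the normal cone: every element of C satisfies
   phi (y - x) <= f y - inf_t f_t x + eps on dom f, so adding arbitrarily large multiples of a
   recession direction d forces d (y - x) <= 0.
   Conversely, let d be normal to dom f and suppose c + s d is not in C for some c in C, s >= 0.
   Weak* separation (which only involves finitely many coordinates) gives z with d z > 0, hence
   f = +infinity on the open ray x + ]0, oo[ z.  Compactness of T and upper semicontinuity in t
   single out one f_t growing along that ray faster than any prescribed slope, and separating a
   segment of the ray from the epigraph of f_t produces an eps-subgradient of f_t at x whose
   slope in direction z contradicts the separation.  The separation theorems rest on a Zorn
   lemma proof of Hahn-Banach applied to Minkowski functionals. *)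

section \<open>Sublinear functionals and the Hahn--Banach theorem\<close>

definition sublinear :: "('b::real_vector \<Rightarrow> real) \<Rightarrow> bool" where
  "sublinear q \<longleftrightarrow> (\<forall>x y. q (x + y) \<le> q x + q y) \<and> (\<forall>c x. c \<ge> 0 \<longrightarrow> q (c *\<^sub>R x) = c * q x)"

lemma sublinear_add_le: "sublinear q \<Longrightarrow> q (x + y) \<le> q x + q y"
  unfolding sublinear_def by blast

lemma sublinear_scaleR: "sublinear q \<Longrightarrow> c \<ge> 0 \<Longrightarrow> q (c *\<^sub>R x) = c * q x"
  unfolding sublinear_def by blast

lemma sublinear_zero: "sublinear q \<Longrightarrow> q 0 = 0"
  using sublinear_scaleR[of q 0 0] by simp

lemma sublinear_minus_le: "sublinear q \<Longrightarrow> - q (- x) \<le> q x"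
  using sublinear_add_le[of q x "- x"] sublinear_zero[of q] by simp

lemma linear_if_sublinear_odd:
  assumes q: "sublinear q" and odd: "\<And>x. q (- x) = - q x"
  shows "linear q"
proof (rule linearI)
  fix x y
  show "q (x + y) = q x + q y"
    using sublinear_add_le[OF q, of x y] sublinear_add_le[OF q, of "- x" "- y"]
      odd[of "x + y"] odd[of x] odd[of y] by (simp add: add.commute)
next
  fix c :: real and x
  show "q (c *\<^sub>R x) = c *\<^sub>R q x"
  proof (cases "c \<ge> 0")
    case True then show ?thesis using sublinear_scaleR[OF q] by simp
  next
    case False
    then show ?thesis using odd[of "c *\<^sub>R x"] sublinear_scaleR[OF q, of "- c" x] by simp
  qed
qed

text \<open>The one-dimensional step of the Hahn--Banach argument.\<close>
definition lower_along :: "('b::real_vector \<Rightarrow> real) \<Rightarrow> 'b \<Rightarrow> real \<Rightarrow> 'b \<Rightarrow> real" where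
  "lower_along p y a z = Inf ((\<lambda>t. p (z + t *\<^sub>R y) - t * a) ` {0..})"

context
  fixes p :: "'b::real_vector \<Rightarrow> real" and y :: 'b and a :: real
  assumes p: "sublinear p" and a: "a \<le> p y"
begin

lemma lower_along_le:
  assumes "t \<ge> 0"
  shows "lower_along p y a z \<le> p (z + t *\<^sub>R y) - t * a"
proof -
  have "- p (- z) \<le> p (z + s *\<^sub>R y) - s * a" if "s \<ge> 0" for s
  proof -
    have "p (s *\<^sub>R y) \<le> p (z + s *\<^sub>R y) + p (- z)"
      using sublinear_add_le[OF p, of "z + s *\<^sub>R y" "- z"] by simp
    moreover have "s * a \<le> s * p y" using a that by (simp add: mult_left_mono)
    ultimately show ?thesis using sublinear_scaleR[OF p that, of y] by linarith
  qed
  then show ?thesis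
    unfolding lower_along_def by (intro cInf_lower bdd_belowI2) (use assms in auto)
qed

lemma lower_along_ge:
  assumes "\<And>t. t \<ge> 0 \<Longrightarrow> b \<le> p (z + t *\<^sub>R y) - t * a"
  shows "b \<le> lower_along p y a z"
  unfolding lower_along_def by (rule cInf_greatest) (use assms in auto)

lemma lower_along_below: "lower_along p y a z \<le> p z"
  using lower_along_le[of 0] by simp

lemma lower_along_minus: "lower_along p y a (- y) \<le> - a"
  using lower_along_le[of 1 "- y"] sublinear_zero[OF p] by simp

lemma sublinear_lower_along: "sublinear (lower_along p y a)"
  unfolding sublinear_def
proof (intro conjI allI impI)
  let ?r = "lower_along p y a"
  fix z1 z2
  have "?r (z1 + z2) - (p (z2 + t *\<^sub>R y) - t * a) \<le> ?r z1" if t: "t \<ge> 0" for t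
  proof (rule lower_along_ge)
    fix s :: real assume s: "s \<ge> 0"
    have "?r (z1 + z2) \<le> p ((z1 + s *\<^sub>R y) + (z2 + t *\<^sub>R y)) - (s + t) * a"
      using lower_along_le[of "s + t" "z1 + z2"] s t by (simp add: algebra_simps)
    also have "\<dots> \<le> p (z1 + s *\<^sub>R y) + p (z2 + t *\<^sub>R y) - (s + t) * a"
      using sublinear_add_le[OF p] by simp
    finally show "?r (z1 + z2) - (p (z2 + t *\<^sub>R y) - t * a) \<le> p (z1 + s *\<^sub>R y) - s * a"
      by (simp add: algebra_simps)
  qed
  then have "?r (z1 + z2) - ?r z1 \<le> ?r z2"
    by (intro lower_along_ge) (auto simp: algebra_simps)
  then show "?r (z1 + z2) \<le> ?r z1 + ?r z2" by simp
next
  let ?r = "lower_along p y a"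
  fix c :: real and z assume "c \<ge> 0"
  show "?r (c *\<^sub>R z) = c * ?r z"
  proof (cases "c = 0")
    case True
    have "0 \<le> ?r 0"
      by (rule lower_along_ge) (use a in \<open>auto simp: sublinear_scaleR[OF p] mult_left_mono\<close>)
    then show ?thesis using True lower_along_below[of 0] sublinear_zero[OF p] by simp
  next
    case False
    with \<open>c \<ge> 0\<close> have c: "c > 0" by simp
    have hom: "p (c *\<^sub>R z + (c * s) *\<^sub>R y) = c * p (z + s *\<^sub>R y)" for s
      using sublinear_scaleR[OF p, of c "z + s *\<^sub>R y"] c by (simp add: scaleR_add_right)
    have "?r (c *\<^sub>R z) / c \<le> ?r z"
    proof (rule lower_along_ge)
      fix s :: real assume "s \<ge> 0"
      then have "?r (c *\<^sub>R z) \<le> c * (p (z + s *\<^sub>R y) - s * a)"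
        using lower_along_le[of "c * s" "c *\<^sub>R z"] c hom by (simp add: algebra_simps)
      then show "?r (c *\<^sub>R z) / c \<le> p (z + s *\<^sub>R y) - s * a"
        using c by (simp add: divide_le_eq mult.commute)
    qed
    moreover have "c * ?r z \<le> ?r (c *\<^sub>R z)"
    proof (rule lower_along_ge)
      fix t :: real assume "t \<ge> 0"
      then have "c * ?r z \<le> c * (p (z + (t / c) *\<^sub>R y) - (t / c) * a)"
        using lower_along_le[of "t / c" z] c by (intro mult_left_mono) auto
      then show "c * ?r z \<le> p (c *\<^sub>R z + t *\<^sub>R y) - t * a"
        using c hom[of "t / c"] by (simp add: algebra_simps)
    qed
    ultimately show ?thesis using c by (simp add: field_simps)
  qed
qed

end

lemma linear_if_minimal_sublinear:
  assumes q: "sublinear q" and min: "\<And>r. sublinear r \<Longrightarrow> r \<le> q \<Longrightarrow> r = q"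
  shows "linear q"
proof (rule linear_if_sublinear_odd[OF q])
  fix x
  have "lower_along q x (q x) = q"
    using sublinear_lower_along[OF q order_refl] lower_along_below[OF q order_refl]
    by (intro min) (auto simp: le_fun_def)
  then have "q (- x) \<le> - q x" using lower_along_minus[OF q, of "q x" x] by simp
  then show "q (- x) = - q x" using sublinear_minus_le[OF q, of "- x"] by simp
qed

lemma sublinear_Inf_chain:
  assumes ne: "Ch \<noteq> {}" and sub: "\<And>r. r \<in> Ch \<Longrightarrow> sublinear r"
    and chain: "\<And>r1 r2. r1 \<in> Ch \<Longrightarrow> r2 \<in> Ch \<Longrightarrow> r1 \<le> r2 \<or> r2 \<le> r1"
    and bdd: "\<And>z. bdd_below ((\<lambda>r. r z) ` Ch)"
  shows "sublinear (\<lambda>z. Inf ((\<lambda>r. r z) ` Ch))" (is "sublinear ?m")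
proof -
  have le: "?m z \<le> r z" if "r \<in> Ch" for r z by (rule cInf_lower) (use that bdd in auto)
  have ge: "b \<le> ?m z" if "\<And>r. r \<in> Ch \<Longrightarrow> b \<le> r z" for b z
    by (rule cInf_greatest) (use that ne in auto)
  show ?thesis
    unfolding sublinear_def
  proof (intro conjI allI impI)
    fix x y
    have split: "?m (x + y) \<le> r1 x + r2 y" if r: "r1 \<in> Ch" "r2 \<in> Ch" for r1 r2
    proof -
      from chain[OF r] show ?thesis
      proof
        assume "r1 \<le> r2"
        then have "r1 y \<le> r2 y" by (simp add: le_fun_def)
        then show ?thesis using le[OF r(1), of "x + y"] sublinear_add_le[OF sub[OF r(1)], of x y] by simp
      next
        assume "r2 \<le> r1"
        then have "r2 x \<le> r1 x" by (simp add: le_fun_def)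
        then show ?thesis using le[OF r(2), of "x + y"] sublinear_add_le[OF sub[OF r(2)], of x y] by simp
      qed
    qed
    have bound: "?m (x + y) - r2 y \<le> ?m x" if "r2 \<in> Ch" for r2
    proof (rule ge)
      fix r1 assume "r1 \<in> Ch"
      with split[OF this that] show "?m (x + y) - r2 y \<le> r1 x" by linarith
    qed
    have "?m (x + y) - ?m x \<le> ?m y"
    proof (rule ge)
      fix r2 assume "r2 \<in> Ch"
      with bound[OF this] show "?m (x + y) - ?m x \<le> r2 y" by linarith
    qed
    then show "?m (x + y) \<le> ?m x + ?m y" by simp
  next
    fix c :: real and z assume c: "c \<ge> 0"
    have hom: "r (c *\<^sub>R z) = c * r z" if "r \<in> Ch" for r
      using sublinear_scaleR[OF sub[OF that] c] .
    show "?m (c *\<^sub>R z) = c * ?m z"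
    proof (cases "c = 0")
      case True
      obtain r where "r \<in> Ch" using ne by auto
      then have "?m 0 \<le> 0" using le[of r 0] sublinear_zero[OF sub[of r]] by simp
      moreover have "0 \<le> ?m 0" by (rule ge) (simp add: sublinear_zero[OF sub])
      ultimately show ?thesis using True by simp
    next
      case False
      with c have c: "c > 0" by simp
      have "?m (c *\<^sub>R z) / c \<le> ?m z"
        by (rule ge) (use le hom c in \<open>auto simp: divide_le_eq mult.commute\<close>)
      moreover have "c * ?m z \<le> ?m (c *\<^sub>R z)"
      proof (rule ge)
        fix r assume "r \<in> Ch"
        then show "c * ?m z \<le> r (c *\<^sub>R z)"
          using le[of r z] hom[of r] c by (simp add: mult_left_mono)
      qed
      ultimately show ?thesis using c by (simp add: field_simps)
    qed
  qed
qed

text \<open>Hahn--Banach: by Zorn's lemma there is a minimal sublinear functional below \<open>p\<close> taking a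
  value \<open>\<le> -1\<close> at \<open>- y0\<close>, and minimality makes it linear.\<close>
lemma sublinear_dominates_linear:
  fixes p :: "'b::real_vector \<Rightarrow> real"
  assumes p: "sublinear p" and y0: "1 \<le> p y0"
  shows "\<exists>L. linear L \<and> L \<le> p \<and> 1 \<le> L y0"
proof -
  define F where "F = {q. sublinear q \<and> q \<le> p \<and> q (- y0) \<le> -1}"
  have po: "partial_order_on F (relation_of (\<lambda>q r. r \<le> q) F)"
    by (auto simp: partial_order_on_def preorder_on_def refl_on_def trans_on_def antisym_on_def relation_of_def)
  have "\<exists>u\<in>F. \<forall>q\<in>Ch. u \<le> q" if Ch: "Ch \<in> Chains (relation_of (\<lambda>q r. r \<le> q) F)" for Ch
  proof (cases "Ch = {}")
    case True
    then show ?thesis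
      using sublinear_lower_along[OF p y0] lower_along_below[OF p y0] lower_along_minus[OF p y0]
      unfolding F_def by (intro bexI[of _ "lower_along p y0 1"]) (auto simp: le_fun_def)
  next
    case False
    define m where "m z = Inf ((\<lambda>r. r z) ` Ch)" for z
    have ChF: "Ch \<subseteq> F" using Chains_relation_of[OF Ch] .
    have bdd: "bdd_below ((\<lambda>r. r z) ` Ch)" for z
    proof (rule bdd_belowI2)
      fix r assume "r \<in> Ch"
      then have "sublinear r" "r \<le> p" using ChF unfolding F_def by auto
      then show "- p (- z) \<le> r z"
        using sublinear_minus_le[of r z] by (simp add: le_fun_def) (smt (verit))
    qed
    have le: "m \<le> r" if "r \<in> Ch" for r
      unfolding m_def le_fun_def using that bdd by (auto intro: cInf_lower)
    have "sublinear m"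
      unfolding m_def
    proof (rule sublinear_Inf_chain[OF False _ _ bdd])
      show "sublinear r" if "r \<in> Ch" for r using that ChF unfolding F_def by auto
      show "r1 \<le> r2 \<or> r2 \<le> r1" if "r1 \<in> Ch" "r2 \<in> Ch" for r1 r2
        using Ch that unfolding Chains_def relation_of_def by auto
    qed
    moreover obtain r where "r \<in> Ch" using False by auto
    ultimately have "m \<in> F" using le[of r] ChF unfolding F_def by (auto simp: le_fun_def intro: order_trans)
    then show ?thesis using le by blast
  qed
  then obtain q where q: "q \<in> F" and min: "\<And>r. r \<in> F \<Longrightarrow> r \<le> q \<Longrightarrow> r = q"
    using predicate_Zorn[OF po] by blast
  have "linear q"
    using q min unfolding F_def by (intro linear_if_minimal_sublinear) (auto simp: le_fun_def intro: order_trans)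
  moreover have "1 \<le> q y0" using linear_neg[OF \<open>linear q\<close>, of y0] q unfolding F_def by simp
  ultimately show ?thesis using q unfolding F_def by blast
qed

section \<open>Minkowski functionals and separation in locally convex spaces\<close>

definition locally_convex_tvs :: "'b::{real_vector,topological_space} itself \<Rightarrow> bool" where
  "locally_convex_tvs _ \<longleftrightarrow>
     continuous_on UNIV (\<lambda>p::'b \<times> 'b. fst p + snd p) \<and>
     continuous_on UNIV (\<lambda>p::real \<times> 'b. fst p *\<^sub>R snd p) \<and>
     (\<forall>U::'b set. open U \<and> 0 \<in> U \<longrightarrow> (\<exists>V. open V \<and> convex V \<and> 0 \<in> V \<and> V \<subseteq> U))"

lemma locally_convex_tvs_if_separated_lcs:
  "separated_lcs TYPE('a::{real_vector,topological_space}) \<Longrightarrow> locally_convex_tvs TYPE('a)"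
  unfolding separated_lcs_def locally_convex_tvs_def by blast

context
  assumes lctvs: "locally_convex_tvs TYPE('b::{real_vector,topological_space})"
begin

lemma lctvs_continuous_add:
  "continuous_on UNIV f \<Longrightarrow> continuous_on UNIV g \<Longrightarrow> continuous_on UNIV (\<lambda>z. f z + (g z :: 'b))"
  using continuous_on_compose2[of UNIV "\<lambda>p::'b \<times> 'b. fst p + snd p" UNIV "\<lambda>z. (f z, g z)"]
    lctvs unfolding locally_convex_tvs_def by (auto intro: continuous_on_Pair)

lemma lctvs_continuous_scaleR:
  "continuous_on UNIV f \<Longrightarrow> continuous_on UNIV g \<Longrightarrow> continuous_on UNIV (\<lambda>z. f z *\<^sub>R (g z :: 'b))"
  using continuous_on_compose2[of UNIV "\<lambda>p::real \<times> 'b. fst p *\<^sub>R snd p" UNIV "\<lambda>z. (f z, g z)"]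
    lctvs unfolding locally_convex_tvs_def by (auto intro: continuous_on_Pair)

lemma lctvs_continuous_diff:
  assumes "continuous_on UNIV f" "continuous_on UNIV g"
  shows "continuous_on UNIV (\<lambda>z. f z - (g z :: 'b))"
proof -
  have "continuous_on UNIV (\<lambda>z. f z + (-1) *\<^sub>R g z)"
    by (intro lctvs_continuous_add lctvs_continuous_scaleR continuous_intros assms)
  then show ?thesis by simp
qed

lemma lctvs_convex_nhds:
  "open (U::'b set) \<Longrightarrow> 0 \<in> U \<Longrightarrow> \<exists>V. open V \<and> convex V \<and> 0 \<in> V \<and> V \<subseteq> U"
  using lctvs unfolding locally_convex_tvs_def by blast

lemma lctvs_absorbing:
  assumes "open (V::'b set)" "0 \<in> V"
  shows "\<exists>s>0. s *\<^sub>R x \<in> V"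
proof -
  have "open ((\<lambda>s::real. s *\<^sub>R x) -` V)"
    by (intro open_vimage lctvs_continuous_scaleR continuous_intros assms)
  moreover have "0 \<in> (\<lambda>s::real. s *\<^sub>R x) -` V" using assms by simp
  ultimately obtain e where e: "e > 0" "ball 0 e \<subseteq> (\<lambda>s::real. s *\<^sub>R x) -` V"
    by (meson open_contains_ball)
  then have "(e / 2) *\<^sub>R x \<in> V" by (auto simp: subset_iff dist_real_def)
  then show ?thesis using e by (intro exI[of _ "e / 2"]) auto
qed

definition minkowski_functional :: "'b set \<Rightarrow> 'b \<Rightarrow> real" where
  "minkowski_functional U x = Inf {t. 0 < t \<and> (1 / t) *\<^sub>R x \<in> U}"

context
  fixes U :: "'b set"
  assumes U: "open U" "convex U" "0 \<in> U"
begin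

private lemma minkowski_functional_le:
  "0 < t \<Longrightarrow> (1 / t) *\<^sub>R x \<in> U \<Longrightarrow> minkowski_functional U x \<le> t"
  unfolding minkowski_functional_def by (rule cInf_lower) (auto intro: bdd_belowI[of _ 0])

private lemma minkowski_functional_ge:
  assumes "\<And>t. 0 < t \<Longrightarrow> (1 / t) *\<^sub>R x \<in> U \<Longrightarrow> b \<le> t"
  shows "b \<le> minkowski_functional U x"
proof -
  obtain s where "s > 0" "s *\<^sub>R x \<in> U" using lctvs_absorbing[OF U(1,3)] by blast
  then have "{t. 0 < t \<and> (1 / t) *\<^sub>R x \<in> U} \<noteq> {}"
    by (auto intro!: exI[of _ "1 / s"])
  then show ?thesis
    unfolding minkowski_functional_def by (rule cInf_greatest) (use assms in auto)
qed

lemma sublinear_minkowski_functional: "sublinear (minkowski_functional U)"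
  unfolding sublinear_def
proof (intro conjI allI impI)
  let ?g = "minkowski_functional U"
  fix x y
  have "?g (x + y) \<le> s + t"
    if st: "0 < s" "(1 / s) *\<^sub>R x \<in> U" "0 < t" "(1 / t) *\<^sub>R y \<in> U" for s t
  proof (rule minkowski_functional_le)
    have "(s / (s + t)) *\<^sub>R ((1 / s) *\<^sub>R x) + (t / (s + t)) *\<^sub>R ((1 / t) *\<^sub>R y) \<in> U"
      using U(2) st by (intro convexD) (auto simp: add_divide_distrib[symmetric])
    then show "(1 / (s + t)) *\<^sub>R (x + y) \<in> U" using st by (simp add: scaleR_add_right)
  qed (use st in simp)
  then have "?g (x + y) - t \<le> ?g x" if "0 < t" "(1 / t) *\<^sub>R y \<in> U" for t
    using that by (intro minkowski_functional_ge) force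
  then have "?g (x + y) - ?g x \<le> ?g y" by (intro minkowski_functional_ge) force
  then show "?g (x + y) \<le> ?g x + ?g y" by simp
next
  let ?g = "minkowski_functional U"
  fix c :: real and x assume "c \<ge> 0"
  show "?g (c *\<^sub>R x) = c * ?g x"
  proof (cases "c = 0")
    case True
    have "?g 0 \<le> t" if "t > 0" for t using minkowski_functional_le[OF that] U(3) by simp
    then have "?g 0 \<le> 0" by (metis field_lbound_gt_zero less_le_not_le linorder_not_le zero_less_one)
    moreover have "0 \<le> ?g 0" by (rule minkowski_functional_ge) simp
    ultimately show ?thesis using True by simp
  next
    case False
    with \<open>c \<ge> 0\<close> have c: "c > 0" by simp
    have "?g (c *\<^sub>R x) / c \<le> ?g x"
    proof (rule minkowski_functional_ge)
      fix t assume "0 < t" "(1 / t) *\<^sub>R x \<in> U"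
      then have "?g (c *\<^sub>R x) \<le> c * t" using c by (intro minkowski_functional_le) auto
      then show "?g (c *\<^sub>R x) / c \<le> t" using c by (simp add: divide_le_eq mult.commute)
    qed
    moreover have "c * ?g x \<le> ?g (c *\<^sub>R x)"
    proof (rule minkowski_functional_ge)
      fix t assume "0 < t" "(1 / t) *\<^sub>R (c *\<^sub>R x) \<in> U"
      then have "?g x \<le> t / c" using c by (intro minkowski_functional_le) auto
      then show "c * ?g x \<le> t" using c by (simp add: le_divide_eq mult.commute)
    qed
    ultimately show ?thesis using c by (simp add: field_simps)
  qed
qed

lemma minkowski_functional_le_1: "u \<in> U \<Longrightarrow> minkowski_functional U u \<le> 1"
  using minkowski_functional_le[of 1 u] by simp

lemma minkowski_functional_ge_1:
  assumes "y \<notin> U"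
  shows "1 \<le> minkowski_functional U y"
proof (rule minkowski_functional_ge, rule ccontr)
  fix t assume t: "0 < t" "(1 / t) *\<^sub>R y \<in> U" "\<not> 1 \<le> t"
  then have "t *\<^sub>R ((1 / t) *\<^sub>R y) + (1 - t) *\<^sub>R 0 \<in> U"
    using U(2,3) by (intro convexD) auto
  then show False using t assms by simp
qed

end

lemma continuous_linear_if_bounded_nhds:
  fixes L :: "'b \<Rightarrow> real"
  assumes L: "linear L" and W: "open W" "0 \<in> W" and bound: "\<And>w. w \<in> W \<Longrightarrow> \<bar>L w\<bar> \<le> 1"
  shows "continuous_on UNIV L"
proof -
  have "open (L -` B)" if B: "open B" for B
  proof (subst open_subopen, intro ballI)
    fix x assume x: "x \<in> L -` B"
    then obtain e where e: "e > 0" "ball (L x) e \<subseteq> B" using B by (meson open_contains_ball vimageE)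
    define N where "N = (\<lambda>y. (2 / e) *\<^sub>R (y - x)) -` W"
    have "open N"
      unfolding N_def by (intro open_vimage W lctvs_continuous_scaleR
          lctvs_continuous_diff continuous_intros)
    moreover have "x \<in> N" unfolding N_def using W(2) by simp
    moreover have "N \<subseteq> L -` B"
    proof
      fix y assume "y \<in> N"
      then have "\<bar>L ((2 / e) *\<^sub>R (y - x))\<bar> \<le> 1" using bound unfolding N_def by auto
      moreover have "L ((2 / e) *\<^sub>R (y - x)) = (2 / e) * (L y - L x)"
        using L by (simp add: linear_scale linear_diff diff_divide_distrib)
      ultimately have "(2 / e) * \<bar>L y - L x\<bar> \<le> 1"
        using e(1) by (simp only: abs_mult) simp
      then have "\<bar>L y - L x\<bar> \<le> e / 2"
        using e(1) by (simp add: field_simps)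
      then show "y \<in> L -` B" using e by (auto simp: dist_real_def abs_minus_commute)
    qed
    ultimately show "\<exists>T. open T \<and> x \<in> T \<and> T \<subseteq> L -` B" by blast
  qed
  then show ?thesis using continuous_on_open_vimage[of UNIV L] by auto
qed

lemma open_convex_translated_sum:
  assumes K: "convex K" and V: "open V" "convex V"
  shows "open {k - k0 + v | k v. k \<in> K \<and> v \<in> (V::'b set)}" (is "open ?U")
    and "convex {k - k0 + v | k v. k \<in> K \<and> v \<in> (V::'b set)}"
proof -
  have "?U = (\<Union>k\<in>K. (\<lambda>u. (k0 - k) + u) -` V)"
    by (auto simp: algebra_simps) (metis add.commute diff_add_cancel add_diff_cancel)
  then show "open ?U"
    by (simp only:) (intro open_UN ballI open_vimage V lctvs_continuous_add continuous_intros)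
  show "convex ?U"
  proof (rule convexI, clarify)
    fix a b :: real and k1 v1 k2 v2
    assume *: "k1 \<in> K" "v1 \<in> V" "k2 \<in> K" "v2 \<in> V" "0 \<le> a" "0 \<le> b" "a + b = 1"
    then have "a *\<^sub>R k1 + b *\<^sub>R k2 \<in> K" "a *\<^sub>R v1 + b *\<^sub>R v2 \<in> V"
      using K V(2) by (auto intro: convexD)
    moreover have "a *\<^sub>R (k1 - k0 + v1) + b *\<^sub>R (k2 - k0 + v2)
        = (a *\<^sub>R k1 + b *\<^sub>R k2) - (a + b) *\<^sub>R k0 + (a *\<^sub>R v1 + b *\<^sub>R v2)"
      by (simp add: algebra_simps)
    ultimately show "\<exists>k v. a *\<^sub>R (k1 - k0 + v1) + b *\<^sub>R (k2 - k0 + v2) = k - k0 + v \<and> k \<in> K \<and> v \<in> V"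
      using *(7) by auto
  qed
qed

text \<open>The convex set is thickened to an open convex neighbourhood \<open>U\<close> of \<open>0\<close> (after translation)
  that still misses \<open>p\<close>, and Hahn--Banach is applied to the Minkowski functional of \<open>U\<close>.\<close>
lemma open_convex_separation:
  fixes K G :: "'b set"
  assumes K: "convex K" and G: "open G" "p \<in> G" "G \<inter> K = {}"
  shows "\<exists>L::'b \<Rightarrow> real. linear L \<and> continuous_on UNIV L \<and> (\<exists>\<delta>>0. \<forall>k\<in>K. L k + \<delta> \<le> L p)"
proof (cases "K = {}")
  case True
  then show ?thesis by (intro exI[of _ "\<lambda>_. 0"]) (auto intro: linearI intro!: exI[of _ 1])
next
  case False
  then obtain k0 where k0: "k0 \<in> K" by auto
  have "open ((\<lambda>v. p - v) -` G)"
    by (intro open_vimage G lctvs_continuous_diff continuous_intros)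
  moreover have "0 \<in> (\<lambda>v. p - v) -` G" using G by simp
  ultimately obtain V where V: "open V" "convex V" "0 \<in> V" "V \<subseteq> (\<lambda>v. p - v) -` G"
    using lctvs_convex_nhds by meson
  define U where "U = {k - k0 + v | k v. k \<in> K \<and> v \<in> V}"
  have "0 \<in> U" unfolding U_def using k0 V(3) by force
  then have U: "open U" "convex U" "0 \<in> U"
    using open_convex_translated_sum[OF K V(1,2)] unfolding U_def by auto
  define y0 where "y0 = p - k0"
  have "y0 \<notin> U"
  proof
    assume "y0 \<in> U"
    then obtain k v where "k \<in> K" "v \<in> V" "p - v = k" unfolding U_def y0_def by (auto simp: algebra_simps)
    then show False using V(4) G(3) by auto
  qed
  then obtain L where L: "linear L" "L \<le> minkowski_functional U" "1 \<le> L y0"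
    using sublinear_dominates_linear[OF sublinear_minkowski_functional[OF U]
        minkowski_functional_ge_1[OF U]] by blast
  have LU: "L u \<le> 1" if "u \<in> U" for u
    using L(2) minkowski_functional_le_1[OF U that] by (auto simp: le_fun_def intro: order_trans)
  have "continuous_on UNIV L"
  proof (rule continuous_linear_if_bounded_nhds[OF L(1)])
    show "open (U \<inter> uminus -` U)"
      using U(1) lctvs_continuous_diff[of "\<lambda>_. 0" id]
      by (intro open_Int open_vimage) (auto simp: id_def)
    show "0 \<in> U \<inter> uminus -` U" using U(3) by simp
    show "\<bar>L w\<bar> \<le> 1" if "w \<in> U \<inter> uminus -` U" for w
      using LU[of w] LU[of "- w"] that linear_neg[OF L(1), of w] by auto
  qed
  moreover obtain s where s: "s > 0" "s *\<^sub>R y0 \<in> V" using lctvs_absorbing[OF V(1,3)] by blast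
  have Ly0: "1 \<le> L p - L k0" using L(1,3) by (simp add: y0_def linear_diff)
  have "L k + s \<le> L p" if k: "k \<in> K" for k
  proof -
    have "L (k - k0 + s *\<^sub>R y0) \<le> 1" using k s(2) by (intro LU) (auto simp: U_def)
    moreover have "L (k - k0 + s *\<^sub>R y0) = L k - L k0 + s * (L p - L k0)"
      using L(1) by (simp add: y0_def linear_add linear_diff linear_scale)
    moreover have "s \<le> s * (L p - L k0)"
      using mult_left_mono[OF Ly0, of s] s(1) by simp
    ultimately show ?thesis using Ly0 by linarith
  qed
  ultimately show ?thesis using L(1) s(1) by blast
qed

end

lemma locally_convex_tvs_normed: "locally_convex_tvs TYPE('b::real_normed_vector)"
  unfolding locally_convex_tvs_def
proof (intro conjI allI impI)
  fix U :: "'b set" assume "open U \<and> 0 \<in> U"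
  then obtain e where "e > 0" "ball 0 e \<subseteq> U" by (meson open_contains_ball)
  then show "\<exists>V. open V \<and> convex V \<and> 0 \<in> V \<and> V \<subseteq> U"
    by (intro exI[of _ "ball 0 e"]) auto
qed (intro continuous_intros)+

lemma locally_convex_tvs_prod_real:
  assumes lctvs: "locally_convex_tvs TYPE('a::{real_vector,topological_space})"
  shows "locally_convex_tvs TYPE('a \<times> real)"
  unfolding locally_convex_tvs_def
proof (intro conjI allI impI)
  have "continuous_on UNIV (\<lambda>p::('a \<times> real) \<times> ('a \<times> real).
      (fst (fst p) + fst (snd p), snd (fst p) + snd (snd p)))"
    by (intro continuous_on_Pair lctvs_continuous_add[OF lctvs] continuous_intros)
  then show "continuous_on UNIV (\<lambda>p::('a \<times> real) \<times> ('a \<times> real). fst p + snd p)"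
    by (simp add: plus_prod_def case_prod_beta)
  have "continuous_on UNIV (\<lambda>p::real \<times> ('a \<times> real). (fst p *\<^sub>R fst (snd p), fst p * snd (snd p)))"
    by (intro continuous_on_Pair lctvs_continuous_scaleR[OF lctvs] continuous_intros)
  then show "continuous_on UNIV (\<lambda>p::real \<times> ('a \<times> real). fst p *\<^sub>R snd p)"
    by (simp add: scaleR_prod_def case_prod_beta)
next
  fix U :: "('a \<times> real) set" assume U: "open U \<and> 0 \<in> U"
  then obtain A B where AB: "open A" "open B" "0 \<in> A" "0 \<in> B" "A \<times> B \<subseteq> U"
    by (metis open_prod_elim zero_prod_def mem_Sigma_iff)
  obtain V where V: "open V" "convex V" "0 \<in> V" "V \<subseteq> A"
    using lctvs_convex_nhds[OF lctvs AB(1,3)] by blast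
  obtain e where e: "e > 0" "ball 0 e \<subseteq> B" using AB by (meson open_contains_ball)
  show "\<exists>V. open V \<and> convex V \<and> 0 \<in> V \<and> V \<subseteq> U"
    using V e AB by (intro exI[of _ "V \<times> ball 0 e"])
      (auto simp: open_Times convex_Times zero_prod_def)
qed

section \<open>Epigraphs and \<open>\<epsilon>\<close>-subgradients\<close>

lemma closed_epigraph:
  fixes g :: "'a::topological_space \<Rightarrow> ereal"
  assumes "lsc_fun g"
  shows "closed {(y, r::real). g y \<le> ereal r}"
  unfolding closed_def
proof (subst open_subopen, intro ballI)
  fix p assume "p \<in> - {(y, r::real). g y \<le> ereal r}"
  then obtain y r where p: "p = (y, r)" "ereal r < g y" by (cases p) auto
  then obtain c where c: "ereal r < ereal c" "ereal c < g y" using ereal_dense2 by blast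
  have "open (- {y. g y \<le> ereal c})" using assms unfolding lsc_fun_def by auto
  then have "open ((- {y. g y \<le> ereal c}) \<times> {..<c})" by (intro open_Times) auto
  moreover have "p \<in> (- {y. g y \<le> ereal c}) \<times> {..<c}" using p c by auto
  moreover have "(- {y. g y \<le> ereal c}) \<times> {..<c} \<subseteq> - {(y, r::real). g y \<le> ereal r}"
  proof
    fix q assume "q \<in> (- {y. g y \<le> ereal c}) \<times> {..<c}"
    then obtain y' r' where q: "q = (y', r')" "ereal c < g y'" "ereal r' < ereal c" by force
    then have "ereal r' < g y'" by (meson less_trans)
    then show "q \<in> - {(y, r::real). g y \<le> ereal r}" using q(1) by (auto simp: not_le)
  qed
  ultimately show "\<exists>T. open T \<and> p \<in> T \<and> T \<subseteq> - {(y, r::real). g y \<le> ereal r}" by blast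
qed

lemma convex_epigraph:
  fixes g :: "'a::real_vector \<Rightarrow> ereal"
  assumes "convex_fun g"
  shows "convex {(y, r::real). g y \<le> ereal r}"
proof (rule convexI)
  fix p q :: "'a \<times> real" and a b :: real
  assume "p \<in> {(y, r). g y \<le> ereal r}" "q \<in> {(y, r). g y \<le> ereal r}"
    and ab: "0 \<le> a" "0 \<le> b" "a + b = 1"
  then obtain y1 r1 y2 r2 where pq: "p = (y1, r1)" "q = (y2, r2)"
    and 1: "g y1 \<le> ereal r1" and 2: "g y2 \<le> ereal r2" by auto
  have b: "b = 1 - a" using ab by simp
  have "g (a *\<^sub>R y1 + b *\<^sub>R y2) \<le> ereal a * g y1 + ereal b * g y2"
    unfolding b using assms[unfolded convex_fun_def, rule_format, of a y1 y2] ab(1,2) b by simp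
  also have "\<dots> \<le> ereal a * ereal r1 + ereal b * ereal r2"
    using 1 2 ab by (intro add_mono ereal_mult_left_mono) auto
  finally show "a *\<^sub>R p + b *\<^sub>R q \<in> {(y, r). g y \<le> ereal r}"
    by (simp add: pq)
qed

text \<open>The tube lemma gives an open neighbourhood of \<open>0\<close> missing the convex set of differences
  \<open>e - (a + l v)\<close>.\<close>
lemma closed_convex_segment_separation:
  fixes E :: "'b::{real_vector,topological_space} set"
  assumes lctvs: "locally_convex_tvs TYPE('b)" and E: "closed E" "convex E"
    and miss: "\<And>l. l \<in> {0..\<Lambda>} \<Longrightarrow> a + l *\<^sub>R v \<notin> E"
  shows "\<exists>L::'b \<Rightarrow> real. linear L \<and> continuous_on UNIV L \<and>
           (\<exists>\<delta>>0. \<forall>e\<in>E. \<forall>l\<in>{0..\<Lambda>}. L e + \<delta> \<le> L (a + l *\<^sub>R v))"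
proof -
  define D where "D = {e - (a + l *\<^sub>R v) | e l. e \<in> E \<and> l \<in> {0..\<Lambda>}}"
  have "convex D"
  proof (rule convexI, clarsimp simp: D_def)
    fix e1 l1 e2 l2 and s t :: real
    assume *: "e1 \<in> E" "0 \<le> l1" "l1 \<le> \<Lambda>" "e2 \<in> E" "0 \<le> l2" "l2 \<le> \<Lambda>" "0 \<le> s" "0 \<le> t" "s + t = 1"
    have "s *\<^sub>R e1 + t *\<^sub>R e2 \<in> E" using * E(2) by (auto intro: convexD)
    moreover have "s * l1 + t * l2 \<le> \<Lambda>"
      using * convex_bound_le[of l1 \<Lambda> l2 s t] by simp
    moreover have "s *\<^sub>R (e1 - (a + l1 *\<^sub>R v)) + t *\<^sub>R (e2 - (a + l2 *\<^sub>R v))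
        = (s *\<^sub>R e1 + t *\<^sub>R e2) - ((s + t) *\<^sub>R a + (s * l1 + t * l2) *\<^sub>R v)"
      by (simp add: algebra_simps)
    ultimately show "\<exists>e l. s *\<^sub>R (e1 - (a + l1 *\<^sub>R v)) + t *\<^sub>R (e2 - (a + l2 *\<^sub>R v))
        = e - (a + l *\<^sub>R v) \<and> e \<in> E \<and> 0 \<le> l \<and> l \<le> \<Lambda>"
      using * by (intro exI[of _ "s *\<^sub>R e1 + t *\<^sub>R e2"] exI[of _ "s * l1 + t * l2"]) auto
  qed
  define W where "W = (\<lambda>q. fst q + (a + snd q *\<^sub>R v)) -` (- E)"
  have W: "open W"
    unfolding W_def using E(1)
    by (intro open_vimage lctvs_continuous_add[OF lctvs]
        lctvs_continuous_scaleR[OF lctvs] continuous_intros) auto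
  have "{0} \<times> {0..\<Lambda>} \<subseteq> W" using miss unfolding W_def by auto
  from Elementary_Topology.tube_lemma[OF compact_Icc W this]
  obtain G where G: "0 \<in> G" "open G" "G \<times> {0..\<Lambda>} \<subseteq> W" by blast
  have "G \<inter> D = {}"
  proof (rule ccontr)
    assume "G \<inter> D \<noteq> {}"
    then obtain e l where el: "e - (a + l *\<^sub>R v) \<in> G" "e \<in> E" "l \<in> {0..\<Lambda>}"
      unfolding D_def by blast
    then have "(e - (a + l *\<^sub>R v), l) \<in> W" using G(3) by blast
    then show False using el(2) unfolding W_def by simp
  qed
  then have "\<exists>L::'b \<Rightarrow> real. linear L \<and> continuous_on UNIV L \<and> (\<exists>\<delta>>0. \<forall>d\<in>D. L d + \<delta> \<le> L 0)"
    by (rule open_convex_separation[OF lctvs \<open>convex D\<close> G(2) G(1)])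
  then obtain L and \<delta> :: real
    where L: "linear L" "continuous_on UNIV L" "\<delta> > 0" "\<forall>d\<in>D. L d + \<delta> \<le> L 0"
    by blast
  have "L e + \<delta> \<le> L (a + l *\<^sub>R v)" if "e \<in> E" "l \<in> {0..\<Lambda>}" for e l
  proof -
    have "e - (a + l *\<^sub>R v) \<in> D" using that unfolding D_def by blast
    then show ?thesis using L(4) linear_diff[OF L(1)] linear_0[OF L(1)] by fastforce
  qed
  then show ?thesis using L by blast
qed

lemma linear_on_prod_real:
  fixes L :: "'a::real_vector \<times> real \<Rightarrow> real"
  assumes "linear L"
  shows "L (y, r) = L (y, 0) + r * L (0, 1)" and "linear (\<lambda>y. L (y, 0))"
proof -
  have "(y, r) = (y, 0) + r *\<^sub>R (0::'a, 1::real)" by simp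
  then show "L (y, r) = L (y, 0) + r * L (0, 1)"
    using linear_add[OF assms] linear_scale[OF assms] by (metis real_scaleR_def)
  show "linear (\<lambda>y. L (y, 0))"
  proof (rule linearI)
    show "L (b1 + b2, 0) = L (b1, 0) + L (b2, 0)" for b1 b2
      using linear_add[OF assms, of "(b1, 0)" "(b2, 0)"] by simp
    show "L (c *\<^sub>R b, 0) = c *\<^sub>R L (b, 0)" for c b
      using linear_scale[OF assms, of c "(b, 0)"] by simp
  qed
qed

text \<open>The separating functional of the epigraph and the segment of the line of slope \<open>K\<close> through
  \<open>(x, g x - \<epsilon>)\<close> has a negative \<open>\<real>\<close>-component; normalised, its \<open>X\<close>-component is the
  \<open>\<epsilon>\<close>-subgradient.\<close>
lemma eps_subdiff_slope_from_segment:
  fixes g :: "'a::{real_vector,topological_space} \<Rightarrow> ereal"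
  assumes lctvs: "locally_convex_tvs TYPE('a)" and g: "proper_fun g" "convex_fun g" "lsc_fun g"
    and gx: "g x = ereal gx" and Lam: "\<Lambda> > 0"
    and seg: "\<And>l. l \<in> {0..\<Lambda>} \<Longrightarrow> ereal (gx - \<epsilon> + K * l) < g (x + l *\<^sub>R z)"
  shows "\<exists>\<phi>\<in>eps_subdiff \<epsilon> g x. K - \<epsilon> / \<Lambda> \<le> \<phi> z"
proof -
  define E where "E = {(y, r::real). g y \<le> ereal r}"
  have "(x, gx - \<epsilon>) + l *\<^sub>R (z, K) \<notin> E" if "l \<in> {0..\<Lambda>}" for l
    using seg[OF that] unfolding E_def by (auto simp: algebra_simps)
  then obtain L and \<delta> :: real where L: "linear L" "continuous_on UNIV L" "\<delta> > 0"
      and sep: "\<And>e l. e \<in> E \<Longrightarrow> l \<in> {0..\<Lambda>} \<Longrightarrow> L e + \<delta> \<le> L ((x, gx - \<epsilon>) + l *\<^sub>R (z, K))"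
    using closed_convex_segment_separation[OF locally_convex_tvs_prod_real[OF lctvs]
        closed_epigraph[OF g(3)] convex_epigraph[OF g(2)]] unfolding E_def by blast
  define \<phi>0 where "\<phi>0 y = L (y, 0)" for y
  define \<beta> where "\<beta> = L (0, 1)"
  have \<phi>0: "linear \<phi>0" "continuous_on UNIV \<phi>0"
    unfolding \<phi>0_def using linear_on_prod_real(2)[OF L(1)]
    by (auto intro!: continuous_on_compose2[OF L(2)] continuous_intros)
  have Lsplit: "L (y, r) = \<phi>0 y + r * \<beta>" for y r
    unfolding \<phi>0_def \<beta>_def by (rule linear_on_prod_real(1)[OF L(1)])
  have key: "\<phi>0 (y - x) - l * \<phi>0 z + (r - gx + \<epsilon> - K * l) * \<beta> + \<delta> \<le> 0"
    if "g y \<le> ereal r" "l \<in> {0..\<Lambda>}" for y r l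
  proof -
    have "L (y, r) + \<delta> \<le> L (x + l *\<^sub>R z, gx - \<epsilon> + l * K)"
      using sep[of "(y, r)" l] that unfolding E_def by simp
    moreover have "\<phi>0 (x + l *\<^sub>R z) = \<phi>0 x + l * \<phi>0 z" "\<phi>0 (y - x) = \<phi>0 y - \<phi>0 x"
      using \<phi>0(1) by (simp_all add: linear_add linear_scale linear_diff)
    ultimately show ?thesis unfolding Lsplit by (simp add: algebra_simps)
  qed
  have "\<epsilon> > 0" using seg[of 0] Lam gx by simp
  moreover have "\<epsilon> * \<beta> + \<delta> \<le> 0" using key[of x gx 0] gx Lam linear_0[OF \<phi>0(1)] by simp
  ultimately have \<beta>: "\<beta> < 0" using L(3) by (smt (verit) mult_pos_pos mult_nonneg_nonneg)
  define \<psi> where "\<psi> y = \<phi>0 y / (- \<beta>)" for y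
  have "linear \<psi>" unfolding \<psi>_def using \<phi>0(1) by (intro linearI) (auto simp: linear_add linear_scale add_divide_distrib)
  moreover have "continuous_on UNIV \<psi>" unfolding \<psi>_def using \<beta> by (intro continuous_intros \<phi>0(2)) auto
  ultimately have \<psi>: "\<psi> \<in> dual" "linear \<psi>" unfolding dual_def by auto
  have ineq: "\<psi> (y - x) - l * \<psi> z \<le> r - gx + \<epsilon> - K * l" if "g y \<le> ereal r" "l \<in> {0..\<Lambda>}" for y r l
  proof -
    have "\<phi>0 (y - x) - l * \<phi>0 z \<le> (r - gx + \<epsilon> - K * l) * (- \<beta>)" using key[OF that] L(3) by simp
    then have "(\<phi>0 (y - x) - l * \<phi>0 z) / (- \<beta>) \<le> r - gx + \<epsilon> - K * l"
      using \<beta> by (subst pos_divide_le_eq) auto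
    then show ?thesis unfolding \<psi>_def by (simp add: diff_divide_distrib)
  qed
  have "g x + ereal (\<psi> (y - x)) - ereal \<epsilon> \<le> g y" for y
  proof (cases "g y")
    case (real r)
    then show ?thesis using ineq[of y r 0] gx Lam by simp
  qed (use g(1) in \<open>auto simp: proper_fun_def\<close>)
  then have "\<psi> \<in> eps_subdiff \<epsilon> g x" unfolding eps_subdiff_def using gx \<psi>(1) by simp
  moreover have "K - \<epsilon> / \<Lambda> \<le> \<psi> z"
    using ineq[of x gx \<Lambda>] gx Lam linear_0[OF \<psi>(2)] by (simp add: field_simps)
  ultimately show ?thesis by blast
qed

lemma eps_subdiff_slope_from_ray:
  fixes g :: "'a::{real_vector,topological_space} \<Rightarrow> ereal"
  assumes lctvs: "locally_convex_tvs TYPE('a)" and g: "proper_fun g" "convex_fun g" "lsc_fun g"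
    and gx: "g x = ereal a" "a \<le> b" and eps: "\<epsilon> > 0"
    and ray: "\<And>l. l > 0 \<Longrightarrow> ereal (b + K * l) \<le> g (x + l *\<^sub>R z)"
  shows "\<exists>\<phi>\<in>eps_subdiff \<epsilon> g x. K - 1 \<le> \<phi> z"
proof -
  have "ereal (a - \<epsilon> + K * l) < g (x + l *\<^sub>R z)" if "l \<in> {0..\<epsilon>}" for l
  proof (cases "l = 0")
    case False
    then have "ereal (b + K * l) \<le> g (x + l *\<^sub>R z)" using that ray by simp
    moreover have "ereal (a - \<epsilon> + K * l) < ereal (b + K * l)" using gx(2) eps by simp
    ultimately show ?thesis by (rule less_le_trans[rotated])
  qed (use gx eps in simp)
  then have "\<exists>\<phi>\<in>eps_subdiff \<epsilon> g x. K - \<epsilon> / \<epsilon> \<le> \<phi> z"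
    by (rule eps_subdiff_slope_from_segment[OF lctvs g gx(1) eps])
  with eps show ?thesis by simp
qed

section \<open>Separation in the weak\<open>\<^sup>*\<close> topology\<close>

lemma open_fun_contains_finite_box:
  fixes T :: "('i \<Rightarrow> real) set"
  assumes "open T" "\<psi> \<in> T"
  shows "\<exists>Fs e. finite Fs \<and> e > 0 \<and> (\<forall>\<phi>. (\<forall>i\<in>Fs. \<bar>\<phi> i - \<psi> i\<bar> < e) \<longrightarrow> \<phi> \<in> T)"
proof -
  obtain X where X: "\<psi> \<in> (\<Pi>\<^sub>E i\<in>UNIV. X i)" "\<And>i. open (X i)"
      "finite {i. X i \<noteq> UNIV}" "(\<Pi>\<^sub>E i\<in>UNIV. X i) \<subseteq> T"
    using product_topology_open_contains_basis[of "\<lambda>i. euclidean" UNIV T \<psi>] assms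
    unfolding open_fun_def by auto
  define Fs where "Fs = {i. X i \<noteq> UNIV}"
  have "\<forall>i\<in>Fs. \<exists>e>0. ball (\<psi> i) e \<subseteq> X i"
    using X(1,2) by (auto simp: open_contains_ball)
  then obtain e where e: "\<And>i. i \<in> Fs \<Longrightarrow> e i > 0 \<and> ball (\<psi> i) (e i) \<subseteq> X i" by metis
  define e0 where "e0 = (if Fs = {} then 1 else Min (e ` Fs))"
  have "finite Fs" using X(3) unfolding Fs_def .
  then have "e0 > 0" and e0: "\<And>i. i \<in> Fs \<Longrightarrow> e0 \<le> e i" unfolding e0_def using e by auto
  moreover have "\<phi> \<in> T" if "\<forall>i\<in>Fs. \<bar>\<phi> i - \<psi> i\<bar> < e0" for \<phi>
  proof -
    have "\<phi> i \<in> X i" for i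
    proof (cases "i \<in> Fs")
      case True
      then have "\<phi> i \<in> ball (\<psi> i) (e i)"
        using that e0[OF True] by (auto simp: dist_real_def abs_minus_commute)
      then show ?thesis using e[OF True] by auto
    qed (auto simp: Fs_def)
    then show ?thesis using X(4) by auto
  qed
  ultimately show ?thesis using \<open>finite Fs\<close> by blast
qed

text \<open>Finitely supported functions form a normed space (with the \<open>l\<^sup>1\<close> norm), in which the
  separation theorem applies.\<close>
definition coords_on :: "'i set \<Rightarrow> ('i \<Rightarrow> real) \<Rightarrow> ('i \<Rightarrow>\<^sub>0 real)" where
  "coords_on Fs \<phi> = Abs_poly_mapping (\<lambda>i. if i \<in> Fs then \<phi> i else 0)"

lemma lookup_coords_on:
  assumes "finite Fs"
  shows "poly_mapping.lookup (coords_on Fs \<phi>) i = (if i \<in> Fs then \<phi> i else 0)"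
proof -
  have "finite {i. (if i \<in> Fs then \<phi> i else 0) \<noteq> 0}"
    using assms by (rule finite_subset[rotated]) auto
  then show ?thesis unfolding coords_on_def by simp
qed

lemma lookup_scaleR_poly_mapping:
  "poly_mapping.lookup (c *\<^sub>R (p :: 'i \<Rightarrow>\<^sub>0 real)) i = c * poly_mapping.lookup p i"
proof -
  have "finite {i. c *\<^sub>R poly_mapping.lookup p i \<noteq> 0}"
    by (rule finite_subset[of _ "{i. poly_mapping.lookup p i \<noteq> 0}"]) auto
  then show ?thesis unfolding scaleR_poly_mapping_def by simp
qed

lemma coords_on_eq_sum:
  "finite Fs \<Longrightarrow> coords_on Fs \<phi> = (\<Sum>i\<in>Fs. \<phi> i *\<^sub>R Poly_Mapping.single i 1)"
  by (rule poly_mapping_eqI)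
    (simp add: lookup_coords_on lookup_sum lookup_scaleR_poly_mapping lookup_single when_def
      if_distrib[of "(*) _"] sum.delta cong: if_cong)

lemma abs_lookup_diff_le_dist:
  fixes p q :: "'i \<Rightarrow>\<^sub>0 real"
  shows "\<bar>poly_mapping.lookup p i - poly_mapping.lookup q i\<bar> \<le> dist p q"
proof (cases "i \<in> Poly_Mapping.keys p \<union> Poly_Mapping.keys q")
  case True
  have "dist (poly_mapping.lookup p i) (poly_mapping.lookup q i)
      \<le> (\<Sum>j \<in> Poly_Mapping.keys p \<union> Poly_Mapping.keys q.
            dist (poly_mapping.lookup p j) (poly_mapping.lookup q j))"
    by (rule member_le_sum) (use True in auto)
  then show ?thesis by (simp add: dist_poly_mapping_def dist_real_def)
qed (auto simp: in_keys_iff)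

text \<open>A weak\<open>\<^sup>*\<close> neighbourhood only constrains finitely many coordinates, so the separation
  takes place in a finite-dimensional space; the separating functional there is evaluation at \<open>w\<close>.\<close>
lemma wstar_closed_convex_separation:
  fixes C :: "('a::{real_vector,topological_space} \<Rightarrow> real) set"
  assumes C: "C \<subseteq> dual" "wstar_convex C" "closedin (subtopology euclidean dual) C"
    and \<psi>: "\<psi> \<in> dual" "\<psi> \<notin> C"
  shows "\<exists>w. \<exists>\<delta>>0. \<forall>\<phi>\<in>C. \<phi> w + \<delta> \<le> \<psi> w"
proof -
  obtain T where T: "closed T" "C = dual \<inter> T" using C(3) closedin_closed by blast
  then obtain Fs e where Fs: "finite Fs" and e: "e > 0"
      and box: "\<And>\<phi>. (\<forall>i\<in>Fs. \<bar>\<phi> i - \<psi> i\<bar> < e) \<Longrightarrow> \<phi> \<in> - T"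
    using open_fun_contains_finite_box[of "- T" \<psi>] \<psi> by (auto simp: open_Compl)
  define K where "K = coords_on Fs ` C"
  have K: "convex K"
    unfolding K_def
  proof (rule convexI, clarify)
    fix a b :: real and u v assume uv: "u \<in> C" "v \<in> C" and ab: "0 \<le> a" "0 \<le> b" "a + b = 1"
    then have "(\<lambda>x. a * u x + (1 - a) * v x) \<in> C" using C(2) unfolding wstar_convex_def by auto
    moreover have "a *\<^sub>R coords_on Fs u + b *\<^sub>R coords_on Fs v = coords_on Fs (\<lambda>x. a * u x + (1 - a) * v x)"
      using ab by (intro poly_mapping_eqI) (simp add: lookup_add lookup_scaleR_poly_mapping lookup_coords_on[OF Fs])
    ultimately show "a *\<^sub>R coords_on Fs u + b *\<^sub>R coords_on Fs v \<in> coords_on Fs ` C" by blast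
  qed
  have disj: "ball (coords_on Fs \<psi>) e \<inter> K = {}"
  proof (rule ccontr)
    assume "ball (coords_on Fs \<psi>) e \<inter> K \<noteq> {}"
    then obtain \<phi> where \<phi>: "\<phi> \<in> C" "dist (coords_on Fs \<psi>) (coords_on Fs \<phi>) < e"
      unfolding K_def by auto
    then have "\<bar>\<phi> i - \<psi> i\<bar> < e" if "i \<in> Fs" for i
      using abs_lookup_diff_le_dist[of "coords_on Fs \<psi>" i "coords_on Fs \<phi>"] that
      by (simp add: lookup_coords_on[OF Fs] abs_minus_commute)
    then show False using box \<phi>(1) T(2) by auto
  qed
  obtain L :: "('a \<Rightarrow>\<^sub>0 real) \<Rightarrow> real" and \<delta> :: real
    where L: "linear L" "\<delta> > 0" "\<forall>k\<in>K. L k + \<delta> \<le> L (coords_on Fs \<psi>)"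
    using open_convex_separation[OF locally_convex_tvs_normed K open_ball
        centre_in_ball[THEN iffD2, OF e] disj] by blast
  define w where "w = (\<Sum>i\<in>Fs. L (Poly_Mapping.single i 1) *\<^sub>R i)"
  have rep: "L (coords_on Fs \<phi>) = \<phi> w" if "\<phi> \<in> dual" for \<phi>
  proof -
    have "linear \<phi>" using that unfolding dual_def by simp
    then show ?thesis
      unfolding coords_on_eq_sum[OF Fs] w_def using L(1)
      by (simp add: linear_sum linear_scale mult.commute)
  qed
  have "\<phi> w + \<delta> \<le> \<psi> w" if "\<phi> \<in> C" for \<phi>
    using L(3) that rep[of \<phi>] rep[OF \<psi>(1)] C(1) unfolding K_def by force
  then show ?thesis using L(2) by blast
qed

lemma dual_lincomb:
  assumes "u \<in> dual" "v \<in> dual"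
  shows "(\<lambda>w. a * u w + b * v w) \<in> dual"
proof -
  have "linear u" "linear v" "continuous_on UNIV u" "continuous_on UNIV v"
    using assms unfolding dual_def by auto
  then show ?thesis
    unfolding dual_def
    by (auto intro!: linearI continuous_intros simp: linear_add linear_scale algebra_simps)
qed

lemma wstar_convex_dual: "wstar_convex dual"
  unfolding wstar_convex_def using dual_lincomb by blast

lemma wstar_cco_least:
  "C \<subseteq> dual \<Longrightarrow> S \<subseteq> C \<Longrightarrow> wstar_convex C \<Longrightarrow> closedin (subtopology euclidean dual) C \<Longrightarrow> wstar_cco S \<subseteq> C"
  unfolding wstar_cco_def by blast

lemma subset_wstar_cco: "S \<subseteq> wstar_cco S"
  unfolding wstar_cco_def by blast

lemma wstar_cco_subset_dual: "S \<subseteq> dual \<Longrightarrow> wstar_cco S \<subseteq> dual"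
  by (rule wstar_cco_least) (auto simp: wstar_convex_dual)

lemma wstar_cco_separation:
  assumes "\<psi> \<in> dual" "\<psi> \<notin> wstar_cco S"
  shows "\<exists>w. \<exists>\<delta>>0. \<forall>\<phi>\<in>wstar_cco S. \<phi> w + \<delta> \<le> \<psi> w"
proof -
  obtain C where C: "C \<subseteq> dual" "S \<subseteq> C" "wstar_convex C" "closedin (subtopology euclidean dual) C"
      "\<psi> \<notin> C"
    using assms(2) unfolding wstar_cco_def by blast
  obtain w \<delta> where "\<delta> > 0" "\<forall>\<phi>\<in>C. \<phi> w + \<delta> \<le> \<psi> w"
    using wstar_closed_convex_separation[OF C(1,3,4) assms(1) C(5)] by blast
  moreover have "wstar_cco S \<subseteq> C" using wstar_cco_least[OF C(1-4)] .
  ultimately show ?thesis by blast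
qed

section \<open>Recession cones and normal cones\<close>

lemma eps_subdiff_nonempty:
  assumes "locally_convex_tvs TYPE('a::{real_vector,topological_space})"
    and g: "proper_fun g" "convex_fun g" "lsc_fun (g :: 'a \<Rightarrow> ereal)" and "g x = ereal gx" and "\<epsilon> > 0"
  shows "eps_subdiff \<epsilon> g x \<noteq> {}"
  using eps_subdiff_slope_from_segment[OF assms(1) g assms(5) zero_less_one, of \<epsilon> 0 0] assms(5,6)
  by auto

lemma recession_cone_subset_normal_cone:
  assumes C: "C \<subseteq> dual" "c0 \<in> C" and bound: "\<And>\<phi> y. \<phi> \<in> C \<Longrightarrow> y \<in> A \<Longrightarrow> \<phi> (y - x) \<le> B y"
  shows "recession_cone C \<subseteq> normal_cone A x"
proof
  fix d assume "d \<in> recession_cone C"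
  then have ray: "(\<lambda>w. c0 w + s * d w) \<in> C" if "s \<ge> 0" for s
    using C(2) that unfolding recession_cone_def by blast
  have "(\<lambda>w. 1 * (c0 w + 1 * d w) + (-1) * c0 w) \<in> dual"
    using C ray[of 1] by (intro dual_lincomb) auto
  moreover have "(\<lambda>w. 1 * (c0 w + 1 * d w) + (-1) * c0 w) = d" by auto
  ultimately have "d \<in> dual" by simp
  moreover have "d (y - x) \<le> 0" if y: "y \<in> A" for y
  proof (rule ccontr)
    assume "\<not> d (y - x) \<le> 0"
    then have pos: "d (y - x) > 0" by simp
    define s where "s = (B y - c0 (y - x) + 1) / d (y - x)"
    have "s \<ge> 0" unfolding s_def using bound[OF C(2) y] pos by simp
    then have "c0 (y - x) + s * d (y - x) \<le> B y" using bound[OF ray y] by simp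
    moreover have "s * d (y - x) = B y - c0 (y - x) + 1" unfolding s_def using pos by simp
    ultimately show False by simp
  qed
  ultimately show "d \<in> normal_cone A x" unfolding normal_cone_def by auto
qed

lemma wstar_closed_convex_affine_bounds:
  fixes A :: "'a::{real_vector,topological_space} set" and x :: 'a and B :: "'a \<Rightarrow> real"
  defines "H \<equiv> {\<phi>\<in>dual. \<forall>y\<in>A. \<phi> (y - x) \<le> B y}"
  shows "wstar_convex H" and "closedin (subtopology euclidean dual) H"
proof -
  show "wstar_convex H"
    unfolding wstar_convex_def H_def
  proof (intro ballI, clarify, intro conjI ballI)
    fix u v and \<theta> :: real and y
    assume "u \<in> dual" "v \<in> dual" "\<theta> \<in> {0..1}" and uv: "\<forall>y\<in>A. u (y - x) \<le> B y" "\<forall>y\<in>A. v (y - x) \<le> B y"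
    then show "(\<lambda>x. \<theta> * u x + (1 - \<theta>) * v x) \<in> dual" by (intro dual_lincomb)
    assume "y \<in> A"
    then show "\<theta> * u (y - x) + (1 - \<theta>) * v (y - x) \<le> B y"
      using uv \<open>\<theta> \<in> {0..1}\<close> convex_bound_le[of "u (y - x)" "B y" "v (y - x)" \<theta> "1 - \<theta>"] by auto
  qed
  have "closed (\<Inter>y\<in>A. {\<phi>::'a \<Rightarrow> real. \<phi> (y - x) \<le> B y})"
    by (intro closed_INT ballI closed_Collect_le continuous_intros continuous_on_product_coordinates)
  moreover have "H = dual \<inter> (\<Inter>y\<in>A. {\<phi>. \<phi> (y - x) \<le> B y})" unfolding H_def by auto
  ultimately show "closedin (subtopology euclidean dual) H" by (simp add: closedin_closed_Int)
qed

lemma SUP_proper_finite: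
  assumes "T \<noteq> {}" "\<And>t. t \<in> T \<Longrightarrow> proper_fun (ft t)" "(SUP t\<in>T. ft t y) < \<infinity>"
  shows "\<exists>b. (SUP t\<in>T. ft t y) = ereal b"
proof -
  obtain t where t: "t \<in> T" using assms(1) by blast
  have "- \<infinity> < ft t y" using assms(2)[OF t] unfolding proper_fun_def by auto
  also have "\<dots> \<le> (SUP t\<in>T. ft t y)" using t by (rule SUP_upper)
  finally show ?thesis using assms(3) by (cases "SUP t\<in>T. ft t y") auto
qed

lemma convex_fun_below_chord:
  assumes "convex_fun g" "g x \<le> ereal a" "g (x + l *\<^sub>R z) \<le> ereal (a + K * l)"
    and "0 < m" "m \<le> l"
  shows "g (x + m *\<^sub>R z) \<le> ereal (a + K * m)"
proof -
  define \<theta> where "\<theta> = m / l"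
  have \<theta>: "0 \<le> \<theta>" "\<theta> \<le> 1" "\<theta> * l = m" unfolding \<theta>_def using assms(4,5) by auto
  have "x + m *\<^sub>R z = \<theta> *\<^sub>R (x + l *\<^sub>R z) + (1 - \<theta>) *\<^sub>R x"
    unfolding \<theta>(3)[symmetric] by (simp add: algebra_simps)
  then have "g (x + m *\<^sub>R z) \<le> ereal \<theta> * g (x + l *\<^sub>R z) + ereal (1 - \<theta>) * g x"
    using assms(1) \<theta> unfolding convex_fun_def by auto
  also have "\<dots> \<le> ereal \<theta> * ereal (a + K * l) + ereal (1 - \<theta>) * ereal a"
    using assms(2,3) \<theta> by (intro add_mono ereal_mult_left_mono) auto
  also have "\<dots> = ereal (a + K * m)"
    using \<theta>(3) by (simp add: algebra_simps flip: \<theta>(3))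
  finally show ?thesis .
qed

text \<open>If no single \<open>f\<^sub>t\<close> stays above the line, every \<open>f\<^sub>t\<close> dips below it somewhere; by
  upper semicontinuity and compactness finitely many points of the ray suffice, and by convexity
  all \<open>f\<^sub>t\<close> are below the line at the smallest of them.\<close>
lemma compact_usc_index_above_ray:
  fixes \<tau> :: "'t topology" and ft :: "'t \<Rightarrow> 'a::real_vector \<Rightarrow> ereal"
  assumes compact: "compact_space \<tau>"
    and usc: "\<And>z. \<forall>c::real. openin \<tau> {t \<in> topspace \<tau>. ft t z < ereal c}"
    and conv: "\<And>t. t \<in> topspace \<tau> \<Longrightarrow> convex_fun (ft t)"
    and below: "\<And>t. t \<in> topspace \<tau> \<Longrightarrow> ft t x \<le> ereal a"
    and ray: "\<And>l. l > 0 \<Longrightarrow> (SUP t\<in>topspace \<tau>. ft t (x + l *\<^sub>R z)) = \<infinity>"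
    and Tne: "topspace \<tau> \<noteq> {}"
  shows "\<exists>t0\<in>topspace \<tau>. \<forall>l>0. ereal (a + K * l) \<le> ft t0 (x + l *\<^sub>R z)"
proof (rule ccontr)
  define Below where "Below l = {t \<in> topspace \<tau>. ft t (x + l *\<^sub>R z) < ereal (a + K * l)}" for l
  assume "\<not> ?thesis"
  then have "topspace \<tau> \<subseteq> \<Union>(Below ` {0<..})" unfolding Below_def by (force simp: not_le)
  moreover have "\<forall>U\<in>Below ` {0<..}. openin \<tau> U" unfolding Below_def using usc by blast
  ultimately obtain F where F: "finite F" "F \<subseteq> Below ` {0<..}" "topspace \<tau> \<subseteq> \<Union>F"
    using compact unfolding compact_space_def compactin_def by meson
  then obtain Ls where Ls: "Ls \<subseteq> {0<..}" "finite Ls" "F = Below ` Ls"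
    by (meson finite_subset_image)
  have "Ls \<noteq> {}" using F(3) Ls(3) Tne by auto
  define m where "m = Min Ls"
  have m: "m > 0" "\<And>l. l \<in> Ls \<Longrightarrow> m \<le> l" unfolding m_def using Ls \<open>Ls \<noteq> {}\<close> by auto
  have "ft t (x + m *\<^sub>R z) \<le> ereal (a + K * m)" if t: "t \<in> topspace \<tau>" for t
  proof -
    obtain l where "l \<in> Ls" "t \<in> Below l" using F(3) Ls(3) t by auto
    then show ?thesis
      using convex_fun_below_chord[OF conv[OF t] below[OF t], of l z K m] m
      unfolding Below_def by auto
  qed
  then have "(SUP t\<in>topspace \<tau>. ft t (x + m *\<^sub>R z)) \<le> ereal (a + K * m)" by (rule SUP_least)
  then show False using ray[OF m(1)] by simp
qed

lemma normal_cone_subset_recession_cone_SUP: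
  fixes \<tau> :: "'t topology" and ft :: "'t \<Rightarrow> 'a::{real_vector,topological_space} \<Rightarrow> ereal"
  assumes lctvs: "locally_convex_tvs TYPE('a)"
    and Tne: "topspace \<tau> \<noteq> {}"
    and proper: "\<And>t. t \<in> topspace \<tau> \<Longrightarrow> proper_fun (ft t)"
    and convex: "\<And>t. t \<in> topspace \<tau> \<Longrightarrow> convex_fun (ft t)"
    and lsc: "\<And>t. t \<in> topspace \<tau> \<Longrightarrow> lsc_fun (ft t)"
    and compact: "compact_space \<tau>"
    and usc: "\<And>z. \<forall>c::real. openin \<tau> {t \<in> topspace \<tau>. ft t z < ereal c}"
    and fx: "(SUP t\<in>topspace \<tau>. ft t x) = ereal fx" and eps: "\<epsilon> > 0"
  shows "normal_cone (dom_fun (\<lambda>y. SUP t\<in>topspace \<tau>. ft t y)) x \<subseteq>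
         recession_cone (wstar_cco (\<Union>t\<in>topspace \<tau>. eps_subdiff \<epsilon> (ft t) x))"
proof
  define S where "S = (\<Union>t\<in>topspace \<tau>. eps_subdiff \<epsilon> (ft t) x)"
  fix d assume "d \<in> normal_cone (dom_fun (\<lambda>y. SUP t\<in>topspace \<tau>. ft t y)) x"
  then have d: "d \<in> dual" "\<And>y. (SUP t\<in>topspace \<tau>. ft t y) < \<infinity> \<Longrightarrow> d (y - x) \<le> 0"
    unfolding normal_cone_def dom_fun_def by auto
  have below: "ft t x \<le> ereal fx" if "t \<in> topspace \<tau>" for t
    using SUP_upper[OF that, of "\<lambda>t. ft t x"] fx by simp
  have "S \<subseteq> dual" unfolding S_def eps_subdiff_def by auto
  then have hull_dual: "wstar_cco S \<subseteq> dual" by (rule wstar_cco_subset_dual)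
  have "(\<lambda>w. c w + s * d w) \<in> wstar_cco S" if c: "c \<in> wstar_cco S" and s: "s \<ge> 0" for c s
  proof (rule ccontr)
    assume "(\<lambda>w. c w + s * d w) \<notin> wstar_cco S"
    moreover have "(\<lambda>w. 1 * c w + s * d w) \<in> dual" using c hull_dual d(1) by (intro dual_lincomb) auto
    ultimately obtain z \<delta> where \<delta>: "\<delta> > 0"
      and sep: "\<And>\<phi>. \<phi> \<in> wstar_cco S \<Longrightarrow> \<phi> z + \<delta> \<le> c z + s * d z"
      using wstar_cco_separation[of "\<lambda>w. c w + s * d w" S] by auto
    have "d z > 0" using sep[OF c] \<delta> s by (smt (verit) mult_nonneg_nonpos)
    have ray: "(SUP t\<in>topspace \<tau>. ft t (x + l *\<^sub>R z)) = \<infinity>" if "l > 0" for l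
    proof (rule ccontr)
      assume "(SUP t\<in>topspace \<tau>. ft t (x + l *\<^sub>R z)) \<noteq> \<infinity>"
      then have "d (x + l *\<^sub>R z - x) \<le> 0" by (intro d(2)) (simp add: less_top)
      moreover have "d (x + l *\<^sub>R z - x) = l * d z" using d(1) by (simp add: dual_def linear_scale)
      ultimately show False using that \<open>d z > 0\<close> by (simp add: mult_le_0_iff)
    qed
    define K where "K = c z + s * d z + 1"
    have "\<exists>t0\<in>topspace \<tau>. \<forall>l>0. ereal (fx + K * l) \<le> ft t0 (x + l *\<^sub>R z)"
      by (intro compact_usc_index_above_ray[OF compact usc] convex below ray Tne)
    then obtain t0 where t0: "t0 \<in> topspace \<tau>" "\<And>l. l > 0 \<Longrightarrow> ereal (fx + K * l) \<le> ft t0 (x + l *\<^sub>R z)"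
      by blast
    obtain a where a: "ft t0 x = ereal a" "a \<le> fx"
      using below[OF t0(1)] proper[OF t0(1)] unfolding proper_fun_def by (cases "ft t0 x") auto
    obtain \<phi> where \<phi>: "\<phi> \<in> eps_subdiff \<epsilon> (ft t0) x" "K - 1 \<le> \<phi> z"
      using eps_subdiff_slope_from_ray[OF lctvs proper[OF t0(1)] convex[OF t0(1)] lsc[OF t0(1)] a eps t0(2)]
      by blast
    have "\<phi> \<in> S" using \<phi>(1) t0(1) unfolding S_def by blast
    then have "\<phi> \<in> wstar_cco S" by (rule subsetD[OF subset_wstar_cco])
    then have "\<phi> z + \<delta> \<le> c z + s * d z" by (rule sep)
    then show False using \<phi>(2) \<delta> unfolding K_def by simp
  qed
  then show "d \<in> recession_cone (wstar_cco (\<Union>t\<in>topspace \<tau>. eps_subdiff \<epsilon> (ft t) x))"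
    unfolding recession_cone_def S_def by blast
qed

lemma recession_cone_subset_normal_cone_SUP:
  fixes \<tau> :: "'t topology" and ft :: "'t \<Rightarrow> 'a::{real_vector,topological_space} \<Rightarrow> ereal"
  assumes lctvs: "locally_convex_tvs TYPE('a)"
    and Tne: "topspace \<tau> \<noteq> {}"
    and proper: "\<And>t. t \<in> topspace \<tau> \<Longrightarrow> proper_fun (ft t)"
    and convex: "\<And>t. t \<in> topspace \<tau> \<Longrightarrow> convex_fun (ft t)"
    and lsc: "\<And>t. t \<in> topspace \<tau> \<Longrightarrow> lsc_fun (ft t)"
    and fx: "(SUP t\<in>topspace \<tau>. ft t x) = ereal fx"
    and m: "(INF t\<in>topspace \<tau>. ft t x) = ereal m" and eps: "\<epsilon> > 0"
  shows "recession_cone (wstar_cco (\<Union>t\<in>topspace \<tau>. eps_subdiff \<epsilon> (ft t) x)) \<subseteq>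
         normal_cone (dom_fun (\<lambda>y. SUP t\<in>topspace \<tau>. ft t y)) x"
proof -
  define f where "f y = (SUP t\<in>topspace \<tau>. ft t y)" for y
  define S where "S = (\<Union>t\<in>topspace \<tau>. eps_subdiff \<epsilon> (ft t) x)"
  define B where "B y = real_of_ereal (f y) - m + \<epsilon>" for y
  define H where "H = {\<phi>\<in>dual. \<forall>y\<in>dom_fun f. \<phi> (y - x) \<le> B y}"
  have ftx: "\<exists>a. ft t x = ereal a \<and> m \<le> a" if t: "t \<in> topspace \<tau>" for t
  proof -
    have "ereal m \<le> ft t x" using INF_lower[OF t, of "\<lambda>t. ft t x"] m by simp
    moreover have "ft t x \<le> ereal fx" using SUP_upper[OF t, of "\<lambda>t. ft t x"] fx by simp
    ultimately show ?thesis by (cases "ft t x") auto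
  qed
  have "S \<subseteq> H"
  proof
    fix \<phi> assume "\<phi> \<in> S"
    then obtain t where t: "t \<in> topspace \<tau>" and \<phi>: "\<phi> \<in> eps_subdiff \<epsilon> (ft t) x"
      unfolding S_def by blast
    obtain a where a: "ft t x = ereal a" "m \<le> a" using ftx[OF t] by blast
    then have "\<phi> \<in> dual" and sub: "\<And>y. ft t x + ereal (\<phi> (y - x)) - ereal \<epsilon> \<le> ft t y"
      using \<phi> unfolding eps_subdiff_def by auto
    moreover have "\<phi> (y - x) \<le> B y" if "y \<in> dom_fun f" for y
    proof -
      have "f y < \<infinity>" using that unfolding dom_fun_def by simp
      then have "\<exists>b. f y = ereal b" unfolding f_def by (intro SUP_proper_finite Tne proper)
      then obtain b where b: "f y = ereal b" by blast
      have "ft t y \<le> ereal b" using SUP_upper[OF t, of "\<lambda>t. ft t y"] b unfolding f_def by simp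
      with sub[of y] have "ereal a + ereal (\<phi> (y - x)) - ereal \<epsilon> \<le> ereal b"
        unfolding a(1) by (rule order_trans)
      then have "a + \<phi> (y - x) - \<epsilon> \<le> b" by simp
      then show ?thesis using a(2) b unfolding B_def by simp
    qed
    ultimately show "\<phi> \<in> H" unfolding H_def by blast
  qed
  then have "wstar_cco S \<subseteq> H"
    using wstar_closed_convex_affine_bounds[of "dom_fun f" x B] unfolding H_def
    by (intro wstar_cco_least) auto
  then have bound: "\<And>\<phi> y. \<phi> \<in> wstar_cco S \<Longrightarrow> y \<in> dom_fun f \<Longrightarrow> \<phi> (y - x) \<le> B y"
    unfolding H_def by blast
  have "wstar_cco S \<subseteq> dual" by (rule wstar_cco_subset_dual) (auto simp: S_def eps_subdiff_def)
  moreover obtain t1 where t1: "t1 \<in> topspace \<tau>" using Tne by blast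
  then obtain a where "ft t1 x = ereal a" using ftx by blast
  then have "eps_subdiff \<epsilon> (ft t1) x \<noteq> {}"
    by (rule eps_subdiff_nonempty[OF lctvs proper[OF t1] convex[OF t1] lsc[OF t1] _ eps])
  then obtain c0 where "c0 \<in> eps_subdiff \<epsilon> (ft t1) x" by blast
  then have "c0 \<in> S" using t1 unfolding S_def by blast
  then have "c0 \<in> wstar_cco S" by (rule subsetD[OF subset_wstar_cco])
  ultimately have "recession_cone (wstar_cco S) \<subseteq> normal_cone (dom_fun f) x"
    using bound by (rule recession_cone_subset_normal_cone)
  then show ?thesis unfolding S_def f_def .
qed

theorem corollary2:
  fixes \<tau> :: "'t topology"
    and ft :: "'t \<Rightarrow> 'a::{real_vector,topological_space} \<Rightarrow> ereal"
    and x :: 'a and \<epsilon> :: real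
  assumes X: "separated_lcs TYPE('a)"
    and Tne: "topspace \<tau> \<noteq> {}"
    and fams: "\<And>t. t \<in> topspace \<tau> \<Longrightarrow> proper_fun (ft t) \<and> convex_fun (ft t) \<and> lsc_fun (ft t)"
    and SH_compact: "compact_space \<tau>" and SH_Hausdorff: "Hausdorff_space \<tau>"
    and SH_usc: "\<And>z. \<forall>c::real. openin \<tau> {t \<in> topspace \<tau>. ft t z < ereal c}"
    and xdom: "x \<in> dom_fun (\<lambda>y. SUP t\<in>topspace \<tau>. ft t y)"
    and inf_fin: "(INF t\<in>topspace \<tau>. ft t x) > -\<infinity>"
    and eps: "\<epsilon> > 0"
  shows "normal_cone (dom_fun (\<lambda>y. SUP t\<in>topspace \<tau>. ft t y)) x =
         recession_cone (wstar_cco (\<Union>t\<in>topspace \<tau>. eps_subdiff \<epsilon> (ft t) x))"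
proof -
  have lctvs: "locally_convex_tvs TYPE('a)" using locally_convex_tvs_if_separated_lcs[OF X] .
  have proper: "\<And>t. t \<in> topspace \<tau> \<Longrightarrow> proper_fun (ft t)"
    and convex: "\<And>t. t \<in> topspace \<tau> \<Longrightarrow> convex_fun (ft t)"
    and lsc: "\<And>t. t \<in> topspace \<tau> \<Longrightarrow> lsc_fun (ft t)" using fams by auto
  have "(SUP t\<in>topspace \<tau>. ft t x) < \<infinity>" using xdom unfolding dom_fun_def by simp
  then have "\<exists>fx. (SUP t\<in>topspace \<tau>. ft t x) = ereal fx" by (intro SUP_proper_finite Tne proper)
  then obtain fx where fx: "(SUP t\<in>topspace \<tau>. ft t x) = ereal fx" by blast
  have "(INF t\<in>topspace \<tau>. ft t x) \<le> (SUP t\<in>topspace \<tau>. ft t x)" using Tne by (rule INF_le_SUP)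
  then obtain m where m: "(INF t\<in>topspace \<tau>. ft t x) = ereal m"
    using inf_fin fx by (cases "INF t\<in>topspace \<tau>. ft t x") auto
  show ?thesis
    using normal_cone_subset_recession_cone_SUP[OF lctvs Tne proper convex lsc SH_compact SH_usc fx eps]
      recession_cone_subset_normal_cone_SUP[OF lctvs Tne proper convex lsc fx m eps]
    by (rule equalityI)
qed

end
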